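(* Let $f_{\operatorname{base}}$ be a baseline model. Suppose that the function class $\mathcal{F}$ is convex with $\tau^{(s)}\in\mathcal{F}$ for all $s\in\{1,\ldots,S\}$, and that $\mathcal{H}$ is a convex subset of $\Delta_{S-1}$. Let \[ f^*_{\operatorname{rel}}(\cdot;f_{\operatorname{base}})=\underset{f\in\mathcal{F}}{\arg\min}\ \max_{Q\in\mathcal{C}(Q_{\boldsymbol{X}},\mathcal{H})}\ \mathbb{E}_Q\Big[(Y(1)-Y(0)-f(\boldsymbol{X}))^2-(Y(1)-Y(0)-f_{\operatorname{base}}(\boldsymbol{X}))^2\Big]. \] Then \[ f^*_{\operatorname{rel}}(\cdot;f_{\operatorname{base}})=\sum_{s=1}^S q_s^*\,\tau^{(s)}(\cdot)\quad\text{with}\quad \boldsymbol{q}^*=\underset{\boldsymbol{q}\in\mathcal{H}}{\arg\min}\ \mathbb{E}_{Q_{\boldsymbol{X}}}\Big[\sum_{s=1}^S q_s\tau^{(s)}(\boldsymbol{X})-f_{\operatorname{base}}(\boldsymbol{X})\Big]^2. \]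
   Context: Setting: there are $S$ source sites; site $s$ has a joint distribution $P^{(s)}$ of potential outcomes $(Y(1),Y(0))$ (real-valued) and covariates $\boldsymbol{X}\in\mathcal{X}$, with site-specific conditional average treatment effect (CATE) $\tau^{(s)}(\boldsymbol{x})=\mathbb{E}_{P^{(s)}}[Y(1)-Y(0)\mid \boldsymbol{X}=\boldsymbol{x}]$. $Q_{\boldsymbol{X}}$ is a target covariate distribution on $\mathcal{X}$. For a joint distribution $Q$ of $(Y(1),Y(0),\boldsymbol{X})$, $\tau_Q(\boldsymbol{x})=\mathbb{E}_Q[Y(1)-Y(0)\mid\boldsymbol{X}=\boldsymbol{x}]$. $\Delta_{S-1}=\{\boldsymbol{q}\in\mathbb{R}^S:\sum_s q_s=1,\ \min_s q_s\ge 0\}$. For $\mathcal{H}\subseteq\Delta_{S-1}$, the uncertainty set is $\mathcal{C}(Q_{\boldsymbol{X}},\mathcal{H})=\{Q=(Q_{\boldsymbol{X}},Q_{(Y(1),Y(0))\mid\boldsymbol{X}}):\ \tau_Q(\cdot)=\sum_{s=1}^S q_s\tau^{(s)}(\cdot)\text{ for some }\boldsymbol{q}\in\mathcal{H}\}$. *)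

theory Defs
  imports "HOL-Probability.Probability"
begin

text \<open>Sites are indexed by a finite type 's (S = CARD('s)); weight vectors are real^'s.\<close>

definition prob_simplex :: "(real^'s::finite) set" where
  "prob_simplex = {q. sum (\<lambda>s. q $ s) UNIV = 1 \<and> (\<forall>s. q $ s \<ge> 0)}"

definition tau_mix :: "('s::finite \<Rightarrow> 'x \<Rightarrow> real) \<Rightarrow> real^'s \<Rightarrow> 'x \<Rightarrow> real" where
  "tau_mix tau q x = (\<Sum>s\<in>UNIV. q $ s * tau s x)"

definition fun_convex :: "('x \<Rightarrow> real) set \<Rightarrow> bool" where
  "fun_convex F \<longleftrightarrow> (\<forall>f\<in>F. \<forall>g\<in>F. \<forall>t::real. 0 \<le> t \<and> t \<le> 1 \<longrightarrow>
      (\<lambda>x. t * f x + (1 - t) * g x) \<in> F)"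

text \<open>A joint distribution Q = (Q_X, Q_{(Y(1),Y(0))|X}) with fixed covariate marginal Q_X is
 represented by the conditional law K of (Y(1),Y(0)) given X (a Markov kernel).
 tau_Q(x) = E_{K x}[Y(1) - Y(0)].\<close>
definition unc_set :: "'x measure \<Rightarrow> ('s::finite \<Rightarrow> 'x \<Rightarrow> real) \<Rightarrow> (real^'s) set
    \<Rightarrow> ('x \<Rightarrow> (real \<times> real) measure) set" where
  "unc_set QX tau H = {K. K \<in> measurable QX (subprob_algebra borel)
      \<and> (\<forall>x\<in>space QX. prob_space (K x))
      \<and> (AE x in QX. integrable (K x) (\<lambda>y. fst y - snd y))
      \<and> (\<exists>q\<in>H. AE x in QX. (\<integral>y. (fst y - snd y) \<partial>K x) = tau_mix tau q x)}"

definition expect_joint :: "'x measure \<Rightarrow> ('x \<Rightarrow> (real \<times> real) measure)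
    \<Rightarrow> ('x \<Rightarrow> real \<times> real \<Rightarrow> real) \<Rightarrow> real" where
  "expect_joint QX K g = (\<integral>x. (\<integral>y. g x y \<partial>K x) \<partial>QX)"

definition robust_rel_risk :: "'x measure \<Rightarrow> ('s::finite \<Rightarrow> 'x \<Rightarrow> real) \<Rightarrow> (real^'s) set
    \<Rightarrow> ('x \<Rightarrow> real) \<Rightarrow> ('x \<Rightarrow> real) \<Rightarrow> real" where
  "robust_rel_risk QX tau H fb f =
     (SUP K\<in>unc_set QX tau H. expect_joint QX K
        (\<lambda>x y. (fst y - snd y - f x)\<^sup>2 - (fst y - snd y - fb x)\<^sup>2))"

end

theory Submission
  imports Defs
begin

text \<open>Write tau_q for the mixture of the site CATEs with weights q, and norms and inner
  products for those of L2(QX). Since (D - a)^2 - (D - b)^2 is affine in D, the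
  conditional law of (Y(1), Y(0)) given X enters the relative regret only through its mean,
  so the worst case over the uncertainty set is the supremum over q in H of
  R(f, q) = |f - tau_q|^2 - |fb - tau_q|^2, every q being realised by a point-mass kernel.
  As q* minimises |tau_q - fb|^2 over the convex set H, the first-order condition
  <tau_q* - fb, tau_q - tau_q*> \<ge> 0 and Pythagoras give R(tau_q*, q) \<le> -|fb - tau_q*|^2 for
  all q in H, whereas R(f, q*) = |f - tau_q*|^2 - |fb - tau_q*|^2. Hence the worst-case
  regret of f exceeds that of tau_q* by at least |f - tau_q*|^2, which gives both
  optimality and uniqueness almost everywhere.\<close>

definition square_integrable :: "'a measure \<Rightarrow> ('a \<Rightarrow> real) \<Rightarrow> bool" where
  "square_integrable M f \<longleftrightarrow> f \<in> borel_measurable M \<and> integrable M (\<lambda>x. (f x)\<^sup>2)"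

lemma square_integrable_add:
  assumes "square_integrable M f" "square_integrable M g"
  shows "square_integrable M (\<lambda>x. f x + g x)"
proof -
  have "integrable M (\<lambda>x. (f x + g x)\<^sup>2)"
  proof (rule Bochner_Integration.integrable_bound)
    show "integrable M (\<lambda>x. 2 * (f x)\<^sup>2 + 2 * (g x)\<^sup>2)"
      using assms unfolding square_integrable_def by auto
    have "(f x + g x)\<^sup>2 \<le> 2 * (f x)\<^sup>2 + 2 * (g x)\<^sup>2" for x
      using sum_squares_bound[of "f x" "g x"] by (simp add: power2_sum)
    then show "AE x in M. norm ((f x + g x)\<^sup>2) \<le> norm (2 * (f x)\<^sup>2 + 2 * (g x)\<^sup>2)"
      by simp
  qed (use assms in \<open>auto simp: square_integrable_def\<close>)
  with assms show ?thesis
    unfolding square_integrable_def by auto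
qed

lemma square_integrable_cmult:
  "square_integrable M f \<Longrightarrow> square_integrable M (\<lambda>x. c * f x)"
  unfolding square_integrable_def by (auto simp: power_mult_distrib)

lemma square_integrable_diff:
  assumes "square_integrable M f" "square_integrable M g"
  shows "square_integrable M (\<lambda>x. f x - g x)"
  using square_integrable_add[OF assms(1) square_integrable_cmult[OF assms(2), of "-1"]] by simp

lemma square_integrable_abs:
  "square_integrable M f \<Longrightarrow> square_integrable M (\<lambda>x. \<bar>f x\<bar>)"
  unfolding square_integrable_def by auto

lemma square_integrable_sum:
  "finite A \<Longrightarrow> (\<And>i. i \<in> A \<Longrightarrow> square_integrable M (u i)) \<Longrightarrow>
    square_integrable M (\<lambda>x. \<Sum>i\<in>A. u i x)"
proof (induction A rule: finite_induct)
  case empty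
  then show ?case by (simp add: square_integrable_def)
next
  case (insert a A)
  then show ?case by (simp add: square_integrable_add)
qed

lemma square_integrable_imp_integrable_square:
  "square_integrable M f \<Longrightarrow> integrable M (\<lambda>x. (f x)\<^sup>2)"
  unfolding square_integrable_def by simp

lemma integrable_mult_square_integrable:
  assumes "square_integrable M f" "square_integrable M g"
  shows "integrable M (\<lambda>x. f x * g x)"
proof (rule Bochner_Integration.integrable_bound)
  show "integrable M (\<lambda>x. (f x)\<^sup>2 + (g x)\<^sup>2)"
    using assms unfolding square_integrable_def by auto
  have "\<bar>f x * g x\<bar> \<le> (f x)\<^sup>2 + (g x)\<^sup>2" for x
  proof -
    have "2 * \<bar>f x * g x\<bar> \<le> (f x)\<^sup>2 + (g x)\<^sup>2"
      using sum_squares_bound[of "\<bar>f x\<bar>" "\<bar>g x\<bar>"] by (simp add: abs_mult)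
    then show ?thesis by simp
  qed
  then show "AE x in M. norm (f x * g x) \<le> norm ((f x)\<^sup>2 + (g x)\<^sup>2)"
    by simp
qed (use assms in \<open>auto simp: square_integrable_def\<close>)

lemma integral_square_add_scaled:
  assumes a: "square_integrable M a" and d: "square_integrable M d"
  shows "(\<integral>x. (a x + s * d x)\<^sup>2 \<partial>M) =
    (\<integral>x. (a x)\<^sup>2 \<partial>M) + 2 * s * (\<integral>x. a x * d x \<partial>M) + s\<^sup>2 * (\<integral>x. (d x)\<^sup>2 \<partial>M)"
proof -
  have "(\<integral>x. (a x + s * d x)\<^sup>2 \<partial>M) =
      (\<integral>x. (a x)\<^sup>2 + (2 * s * (a x * d x) + s\<^sup>2 * (d x)\<^sup>2) \<partial>M)"
    by (simp add: power2_sum power_mult_distrib algebra_simps)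
  also have "\<dots> = (\<integral>x. (a x)\<^sup>2 \<partial>M) + 2 * s * (\<integral>x. a x * d x \<partial>M) + s\<^sup>2 * (\<integral>x. (d x)\<^sup>2 \<partial>M)"
    using square_integrable_imp_integrable_square[OF a] square_integrable_imp_integrable_square[OF d]
      integrable_mult_square_integrable[OF a d]
    by simp
  finally show ?thesis .
qed

lemma integral_square_add_ge:
  assumes a: "square_integrable M a" and d: "square_integrable M d"
    and "0 \<le> (\<integral>x. a x * d x \<partial>M)"
  shows "(\<integral>x. (a x)\<^sup>2 \<partial>M) + (\<integral>x. (d x)\<^sup>2 \<partial>M) \<le> (\<integral>x. (a x + d x)\<^sup>2 \<partial>M)"
  using integral_square_add_scaled[OF a d, of 1] assms(3) by simp

lemma AE_eq_0_if_integral_square_le_0: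
  assumes "square_integrable M h" and "(\<integral>x. (h x)\<^sup>2 \<partial>M) \<le> 0"
  shows "AE x in M. h x = 0"
proof -
  have "0 \<le> (\<integral>x. (h x)\<^sup>2 \<partial>M)" by simp
  with assms(2) have "(\<integral>x. (h x)\<^sup>2 \<partial>M) = 0" by linarith
  then have "AE x in M. (h x)\<^sup>2 = 0"
    using assms(1) by (simp add: integral_nonneg_eq_0_iff_AE square_integrable_def)
  then show ?thesis by simp
qed

lemma integral_square_local_min_imp_inner_nonneg:
  assumes a: "square_integrable M a" and d: "square_integrable M d"
    and min: "\<And>s. 0 < s \<Longrightarrow> s \<le> 1 \<Longrightarrow> (\<integral>x. (a x)\<^sup>2 \<partial>M) \<le> (\<integral>x. (a x + s * d x)\<^sup>2 \<partial>M)"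
  shows "0 \<le> (\<integral>x. a x * d x \<partial>M)"
proof -
  define A where "A = (\<integral>x. a x * d x \<partial>M)"
  define B where "B = (\<integral>x. (d x)\<^sup>2 \<partial>M)"
  have "0 \<le> B" unfolding B_def by simp
  have perturbed: "0 \<le> 2 * A + s * B" if "0 < s" "s \<le> 1" for s
  proof -
    have "0 \<le> s * (2 * A + s * B)"
      using min[OF that] unfolding integral_square_add_scaled[OF a d] A_def B_def
      by (simp add: power2_eq_square algebra_simps)
    with \<open>0 < s\<close> show ?thesis by (simp add: zero_le_mult_iff)
  qed
  have "- 2 * A \<le> 0"
  proof (rule field_le_epsilon)
    fix e :: real assume "0 < e"
    define s where "s = min 1 (e / (B + 1))"
    have "0 < s" "s \<le> 1" using \<open>0 < e\<close> \<open>0 \<le> B\<close> by (auto simp: s_def)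
    have "s * B \<le> e / (B + 1) * B"
      using \<open>0 \<le> B\<close> by (intro mult_right_mono) (auto simp: s_def)
    also have "\<dots> \<le> e"
      using \<open>0 < e\<close> \<open>0 \<le> B\<close> by (simp add: field_simps)
    finally show "- 2 * A \<le> 0 + e"
      using perturbed[OF \<open>0 < s\<close> \<open>s \<le> 1\<close>] by linarith
  qed
  then show ?thesis by (simp add: A_def)
qed

lemma (in prob_space) integral_square_loss_diff:
  fixes Z :: "'a \<Rightarrow> real"
  assumes "integrable M Z"
  shows "(\<integral>y. (Z y - a)\<^sup>2 - (Z y - b)\<^sup>2 \<partial>M) = (a - expectation Z)\<^sup>2 - (b - expectation Z)\<^sup>2"
proof -
  have "(\<integral>y. (Z y - a)\<^sup>2 - (Z y - b)\<^sup>2 \<partial>M) = (\<integral>y. 2 * (b - a) * Z y + (a\<^sup>2 - b\<^sup>2) \<partial>M)"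
    by (simp add: power2_eq_square algebra_simps)
  also have "\<dots> = 2 * (b - a) * expectation Z + (a\<^sup>2 - b\<^sup>2)"
    using assms by (simp add: prob_space)
  finally show ?thesis
    by (simp add: power2_eq_square algebra_simps)
qed

lemma integral_measurable_subprob_algebra2:
  fixes f :: "'a \<Rightarrow> 'b \<Rightarrow> 'c::{banach, second_countable_topology}"
  assumes f[measurable]: "(\<lambda>(x, y). f x y) \<in> borel_measurable (M \<Otimes>\<^sub>M N)"
    and L[measurable]: "L \<in> measurable M (subprob_algebra N)"
  shows "(\<lambda>x. integral\<^sup>L (L x) (f x)) \<in> borel_measurable M"
proof -
  note measurable_distr2[measurable]
  have "(\<lambda>x. integral\<^sup>L (distr (L x) (M \<Otimes>\<^sub>M N) (\<lambda>y. (x, y))) (\<lambda>(x, y). f x y)) \<in> borel_measurable M"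
    by measurable
  then show ?thesis
    by (rule measurable_cong[THEN iffD1, rotated])
       (simp add: integral_distr subprob_measurableD[OF L])
qed

lemma fun_convex_sum:
  assumes F: "fun_convex F"
  shows "finite A \<Longrightarrow> (\<And>i. i \<in> A \<Longrightarrow> f i \<in> F) \<Longrightarrow> (\<And>i. i \<in> A \<Longrightarrow> 0 \<le> w i) \<Longrightarrow>
    sum w A = 1 \<Longrightarrow> (\<lambda>x. \<Sum>i\<in>A. w i * f i x) \<in> F"
proof (induction A arbitrary: w rule: finite_induct)
  case empty
  then show ?case by simp
next
  case (insert a A)
  have sum_A: "sum w A = 1 - w a" using insert by simp
  show ?case
  proof (cases "w a = 1")
    case True
    then have "\<forall>i\<in>A. w i = 0"
      using insert.hyps(1) insert.prems(2) sum_A True by (simp add: sum_nonneg_eq_0_iff)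
    then have "(\<lambda>x. \<Sum>i\<in>insert a A. w i * f i x) = f a"
      using insert True by (simp add: fun_eq_iff)
    then show ?thesis using insert by simp
  next
    case False
    have "0 \<le> sum w A" using insert.prems(2) by (simp add: sum_nonneg)
    with False sum_A have "w a < 1" by linarith
    define w' where "w' i = w i / (1 - w a)" for i
    have "(\<lambda>x. \<Sum>i\<in>A. w' i * f i x) \<in> F"
    proof (rule insert.IH)
      show "f i \<in> F" if "i \<in> A" for i
        using insert.prems(1) that by simp
      show "0 \<le> w' i" if "i \<in> A" for i
        using insert.prems(2) that \<open>w a < 1\<close> by (simp add: w'_def)
      show "sum w' A = 1"
        using sum_A \<open>w a < 1\<close> by (simp add: w'_def flip: sum_divide_distrib)
    qed
    then have "(\<lambda>x. w a * f a x + (1 - w a) * (\<Sum>i\<in>A. w' i * f i x)) \<in> F"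
      using F[unfolded fun_convex_def, rule_format, of "f a" _ "w a"] insert.prems(1,2) \<open>w a < 1\<close>
      by simp
    moreover have "(\<lambda>x. w a * f a x + (1 - w a) * (\<Sum>i\<in>A. w' i * f i x))
        = (\<lambda>x. \<Sum>i\<in>insert a A. w i * f i x)"
      using insert \<open>w a < 1\<close> by (simp add: fun_eq_iff sum_distrib_left w'_def)
    ultimately show ?thesis by simp
  qed
qed

lemma tau_mix_in_fun_convex:
  assumes "fun_convex F" "\<And>s. tau s \<in> F" "q \<in> prob_simplex"
  shows "tau_mix tau q \<in> F"
  using fun_convex_sum[OF assms(1), of UNIV tau "\<lambda>s. q $ s"] assms(2,3)
  by (simp add: tau_mix_def[abs_def] prob_simplex_def)

lemma square_integrable_tau_mix:
  "(\<And>s. square_integrable M (tau s)) \<Longrightarrow> square_integrable M (tau_mix tau q)"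
  unfolding tau_mix_def by (intro square_integrable_sum square_integrable_cmult) auto

lemma tau_mix_segment:
  "tau_mix tau ((1 - t) *\<^sub>R q + t *\<^sub>R p) x = tau_mix tau q x + t * (tau_mix tau p x - tau_mix tau q x)"
  unfolding tau_mix_def
  by (simp add: algebra_simps sum.distrib sum_distrib_left sum_subtractf)

lemma abs_tau_mix_le:
  assumes "q \<in> prob_simplex"
  shows "\<bar>tau_mix tau q x\<bar> \<le> (\<Sum>s\<in>UNIV. \<bar>tau s x\<bar>)"
proof -
  have q_le_1: "q $ s \<le> 1" for s
    using assms member_le_sum[of s UNIV "\<lambda>s. q $ s"] by (auto simp: prob_simplex_def)
  have "\<bar>tau_mix tau q x\<bar> \<le> (\<Sum>s\<in>UNIV. \<bar>q $ s\<bar> * \<bar>tau s x\<bar>)"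
    unfolding tau_mix_def abs_mult[symmetric] by (rule sum_abs)
  also have "\<dots> \<le> (\<Sum>s\<in>UNIV. \<bar>tau s x\<bar>)"
    using assms q_le_1 by (intro sum_mono mult_left_le_one_le) (auto simp: prob_simplex_def)
  finally show ?thesis .
qed

lemma borel_measurable_tau_mix:
  "(\<And>s. tau s \<in> borel_measurable M) \<Longrightarrow> tau_mix tau q \<in> borel_measurable M"
  unfolding tau_mix_def[abs_def] by measurable

definition mixture_rel_risk :: "'x measure \<Rightarrow> ('s::finite \<Rightarrow> 'x \<Rightarrow> real) \<Rightarrow> ('x \<Rightarrow> real)
    \<Rightarrow> ('x \<Rightarrow> real) \<Rightarrow> real^'s \<Rightarrow> real" where
  "mixture_rel_risk M tau fb f q =
     (\<integral>x. (f x - tau_mix tau q x)\<^sup>2 - (fb x - tau_mix tau q x)\<^sup>2 \<partial>M)"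

lemma borel_measurable_fst_minus_snd[measurable]:
  "(\<lambda>y::real \<times> real. fst y - snd y) \<in> borel_measurable borel"
  by (intro borel_measurable_continuous_onI continuous_intros)

lemma expect_joint_unc_set:
  assumes K: "K \<in> unc_set M tau H"
    and [measurable]: "\<And>s. tau s \<in> borel_measurable M" "f \<in> borel_measurable M" "fb \<in> borel_measurable M"
  obtains q where "q \<in> H" and "expect_joint M K
      (\<lambda>x y. (fst y - snd y - f x)\<^sup>2 - (fst y - snd y - fb x)\<^sup>2) = mixture_rel_risk M tau fb f q"
proof -
  note [measurable] = borel_measurable_tau_mix[where tau = tau and M = M]
  define loss where "loss x y = (fst y - snd y - f x)\<^sup>2 - (fst y - snd y - fb x)\<^sup>2"
    for x and y :: "real \<times> real"
  from K have K_meas[measurable]: "K \<in> measurable M (subprob_algebra borel)"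
    and K_prob: "\<And>x. x \<in> space M \<Longrightarrow> prob_space (K x)"
    and K_int: "AE x in M. integrable (K x) (\<lambda>y. fst y - snd y)"
    by (auto simp: unc_set_def)
  obtain q where "q \<in> H" and K_mean: "AE x in M. (\<integral>y. (fst y - snd y) \<partial>K x) = tau_mix tau q x"
    using K by (auto simp: unc_set_def)
  have "AE x in M. (\<integral>y. loss x y \<partial>K x) = (f x - tau_mix tau q x)\<^sup>2 - (fb x - tau_mix tau q x)\<^sup>2"
    using AE_space K_int K_mean
  proof eventually_elim
    case (elim x)
    then show ?case
      unfolding loss_def by (simp add: prob_space.integral_square_loss_diff[OF K_prob])
  qed
  moreover have "(\<lambda>x. \<integral>y. loss x y \<partial>K x) \<in> borel_measurable M"
  proof (rule integral_measurable_subprob_algebra2[OF _ K_meas])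
    show "(\<lambda>(x, y). loss x y) \<in> borel_measurable (M \<Otimes>\<^sub>M borel)"
      unfolding loss_def by measurable
  qed
  ultimately have "expect_joint M K loss = mixture_rel_risk M tau fb f q"
    unfolding expect_joint_def mixture_rel_risk_def by (intro integral_cong_AE) auto
  with \<open>q \<in> H\<close> show ?thesis
    using that by (simp add: loss_def[abs_def])
qed

lemma point_mass_kernel_in_unc_set:
  assumes "\<And>s. tau s \<in> borel_measurable M" and "q \<in> H"
  shows "(\<lambda>x. return borel (tau_mix tau q x, 0)) \<in> unc_set M tau H"
proof -
  note [measurable] = borel_measurable_tau_mix[where tau = tau and M = M, OF assms(1)]
  have "integrable (return borel (t, 0)) (\<lambda>y. fst y - snd y)" for t :: real
    by (simp add: integrable_iff_bounded nn_integral_return)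
  with assms(2) show ?thesis
    by (auto simp: unc_set_def prob_space_return integral_return)
qed

lemma robust_rel_risk_eq_SUP:
  assumes tau: "\<And>s. tau s \<in> borel_measurable M"
    and f: "f \<in> borel_measurable M" and fb: "fb \<in> borel_measurable M"
  shows "robust_rel_risk M tau H fb f = (SUP q\<in>H. mixture_rel_risk M tau fb f q)"
proof -
  let ?loss = "\<lambda>x (y::real \<times> real). (fst y - snd y - f x)\<^sup>2 - (fst y - snd y - fb x)\<^sup>2"
  have "(\<lambda>K. expect_joint M K ?loss) ` unc_set M tau H = mixture_rel_risk M tau fb f ` H"
  proof (intro equalityI subsetI)
    fix r assume "r \<in> (\<lambda>K. expect_joint M K ?loss) ` unc_set M tau H"
    then obtain K where K: "K \<in> unc_set M tau H" and r: "r = expect_joint M K ?loss" by blast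
    obtain q where "q \<in> H" "expect_joint M K ?loss = mixture_rel_risk M tau fb f q"
      using expect_joint_unc_set[OF K tau f fb] .
    then show "r \<in> mixture_rel_risk M tau fb f ` H"
      unfolding r by blast
  next
    fix r assume "r \<in> mixture_rel_risk M tau fb f ` H"
    then obtain q where q: "q \<in> H" and r: "r = mixture_rel_risk M tau fb f q" by blast
    let ?K = "\<lambda>x. return borel (tau_mix tau q x, 0)"
    have "expect_joint M ?K ?loss = r"
      unfolding expect_joint_def r mixture_rel_risk_def
      by (intro Bochner_Integration.integral_cong) (simp_all add: integral_return power2_commute)
    then show "r \<in> (\<lambda>K. expect_joint M K ?loss) ` unc_set M tau H"
      using point_mass_kernel_in_unc_set[of tau, OF tau q] by blast
  qed
  then show ?thesis
    by (simp add: robust_rel_risk_def)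
qed

lemma mixture_rel_risk_eq_diff:
  assumes "\<And>s. square_integrable M (tau s)" "square_integrable M fb" "square_integrable M f"
  shows "mixture_rel_risk M tau fb f q =
    (\<integral>x. (f x - tau_mix tau q x)\<^sup>2 \<partial>M) - (\<integral>x. (fb x - tau_mix tau q x)\<^sup>2 \<partial>M)"
  unfolding mixture_rel_risk_def
  using assms square_integrable_tau_mix[of M tau q, OF assms(1)]
  by (intro Bochner_Integration.integral_diff square_integrable_imp_integrable_square square_integrable_diff)

text \<open>Without this bound the supremum in robust_rel_risk would be a junk value.\<close>

lemma bdd_above_mixture_rel_risk:
  assumes H: "H \<subseteq> prob_simplex" and tau: "\<And>s. square_integrable M (tau s)"
    and fb: "square_integrable M fb" and f: "square_integrable M f"
  shows "bdd_above (mixture_rel_risk M tau fb f ` H)"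
proof -
  define bound where "bound x = 2 * (f x)\<^sup>2 + 2 * (\<Sum>s\<in>UNIV. \<bar>tau s x\<bar>)\<^sup>2" for x
  have "square_integrable M (\<lambda>x. \<Sum>s\<in>UNIV. \<bar>tau s x\<bar>)"
    using tau by (intro square_integrable_sum square_integrable_abs) auto
  then have "integrable M bound"
    using f unfolding bound_def square_integrable_def by simp
  have "mixture_rel_risk M tau fb f q \<le> (\<integral>x. bound x \<partial>M)" if "q \<in> H" for q
    unfolding mixture_rel_risk_def
  proof (rule integral_mono)
    let ?T = "tau_mix tau q"
    have T: "square_integrable M ?T" by (rule square_integrable_tau_mix[OF tau])
    show "integrable M (\<lambda>x. (f x - ?T x)\<^sup>2 - (fb x - ?T x)\<^sup>2)"
      using f fb T
      by (intro Bochner_Integration.integrable_diff square_integrable_imp_integrable_square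
          square_integrable_diff)
    show "integrable M bound" by fact
    fix x
    have "\<bar>?T x\<bar> \<le> (\<Sum>s\<in>UNIV. \<bar>tau s x\<bar>)"
      using H \<open>q \<in> H\<close> by (intro abs_tau_mix_le) auto
    then have "(?T x)\<^sup>2 \<le> (\<Sum>s\<in>UNIV. \<bar>tau s x\<bar>)\<^sup>2"
      using power_mono[OF _ abs_ge_zero, of "?T x" _ 2] by simp
    moreover have "(f x - ?T x)\<^sup>2 \<le> 2 * (f x)\<^sup>2 + 2 * (?T x)\<^sup>2"
      using sum_squares_bound[of "f x" "- ?T x"] by (simp add: power2_diff)
    ultimately show "(f x - ?T x)\<^sup>2 - (fb x - ?T x)\<^sup>2 \<le> bound x"
      unfolding bound_def using zero_le_power2[of "fb x - ?T x"] by linarith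
  qed
  then show ?thesis by (auto simp: bdd_above_def)
qed

lemma tau_mix_min_imp_inner_nonneg:
  assumes tau: "\<And>s. square_integrable M (tau s)" and fb: "square_integrable M fb"
    and H: "convex H" and qstar: "qstar \<in> H"
    and min: "\<And>q. q \<in> H \<Longrightarrow>
      (\<integral>x. (tau_mix tau qstar x - fb x)\<^sup>2 \<partial>M) \<le> (\<integral>x. (tau_mix tau q x - fb x)\<^sup>2 \<partial>M)"
    and q: "q \<in> H"
  shows "0 \<le> (\<integral>x. (tau_mix tau qstar x - fb x) * (tau_mix tau q x - tau_mix tau qstar x) \<partial>M)"
proof (rule integral_square_local_min_imp_inner_nonneg)
  show "square_integrable M (\<lambda>x. tau_mix tau qstar x - fb x)"
    using tau fb by (intro square_integrable_diff square_integrable_tau_mix)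
  show "square_integrable M (\<lambda>x. tau_mix tau q x - tau_mix tau qstar x)"
    using tau by (intro square_integrable_diff square_integrable_tau_mix)
  fix t :: real assume "0 < t" "t \<le> 1"
  then have "(1 - t) *\<^sub>R qstar + t *\<^sub>R q \<in> H"
    using convexD[OF H qstar q, of "1 - t" t] by simp
  from min[OF this] show "(\<integral>x. (tau_mix tau qstar x - fb x)\<^sup>2 \<partial>M)
      \<le> (\<integral>x. (tau_mix tau qstar x - fb x + t * (tau_mix tau q x - tau_mix tau qstar x))\<^sup>2 \<partial>M)"
    unfolding tau_mix_segment by (simp add: algebra_simps)
qed

lemma mixture_rel_risk_tau_mix_min_le:
  assumes tau: "\<And>s. square_integrable M (tau s)" and fb: "square_integrable M fb"
    and H: "convex H" and qstar: "qstar \<in> H"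
    and min: "\<And>q. q \<in> H \<Longrightarrow>
      (\<integral>x. (tau_mix tau qstar x - fb x)\<^sup>2 \<partial>M) \<le> (\<integral>x. (tau_mix tau q x - fb x)\<^sup>2 \<partial>M)"
    and q: "q \<in> H"
  shows "mixture_rel_risk M tau fb (tau_mix tau qstar) q \<le> - (\<integral>x. (tau_mix tau qstar x - fb x)\<^sup>2 \<partial>M)"
proof -
  let ?ts = "tau_mix tau qstar" and ?T = "tau_mix tau q"
  have ts: "square_integrable M ?ts" and T: "square_integrable M ?T"
    using tau by (auto intro: square_integrable_tau_mix)
  have "(\<integral>x. (?ts x - fb x)\<^sup>2 \<partial>M) + (\<integral>x. (?T x - ?ts x)\<^sup>2 \<partial>M)
      \<le> (\<integral>x. (?ts x - fb x + (?T x - ?ts x))\<^sup>2 \<partial>M)"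
    using ts T fb tau_mix_min_imp_inner_nonneg[OF tau fb H qstar min q]
    by (intro integral_square_add_ge square_integrable_diff)
  moreover have "(\<integral>x. (?ts x - fb x + (?T x - ?ts x))\<^sup>2 \<partial>M) = (\<integral>x. (fb x - ?T x)\<^sup>2 \<partial>M)"
    by (simp add: power2_commute)
  moreover have "(\<integral>x. (?T x - ?ts x)\<^sup>2 \<partial>M) = (\<integral>x. (?ts x - ?T x)\<^sup>2 \<partial>M)"
    by (simp add: power2_commute)
  ultimately show ?thesis
    using mixture_rel_risk_eq_diff[where tau = tau and q = q, OF tau fb ts] by linarith
qed

lemma robust_rel_risk_tau_mix_min_gap:
  assumes H_sub: "H \<subseteq> prob_simplex" and H: "convex H" and qstar: "qstar \<in> H"
    and min: "\<And>q. q \<in> H \<Longrightarrow>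
      (\<integral>x. (tau_mix tau qstar x - fb x)\<^sup>2 \<partial>M) \<le> (\<integral>x. (tau_mix tau q x - fb x)\<^sup>2 \<partial>M)"
    and tau: "\<And>s. square_integrable M (tau s)" and fb: "square_integrable M fb"
    and f: "square_integrable M f"
  shows "robust_rel_risk M tau H fb (tau_mix tau qstar) + (\<integral>x. (f x - tau_mix tau qstar x)\<^sup>2 \<partial>M)
    \<le> robust_rel_risk M tau H fb f"
proof -
  let ?ts = "tau_mix tau qstar"
  have ts: "square_integrable M ?ts"
    using tau by (rule square_integrable_tau_mix)
  have meas: "\<And>s. tau s \<in> borel_measurable M" "fb \<in> borel_measurable M"
      "f \<in> borel_measurable M" "?ts \<in> borel_measurable M"
    using tau fb f ts by (auto simp: square_integrable_def)
  have "robust_rel_risk M tau H fb ?ts \<le> - (\<integral>x. (?ts x - fb x)\<^sup>2 \<partial>M)"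
    unfolding robust_rel_risk_eq_SUP[OF meas(1,4,2)]
    using qstar mixture_rel_risk_tau_mix_min_le[OF tau fb H qstar min] by (auto intro: cSUP_least)
  moreover have "mixture_rel_risk M tau fb f qstar \<le> robust_rel_risk M tau H fb f"
    unfolding robust_rel_risk_eq_SUP[OF meas(1,3,2)]
    by (rule cSUP_upper[OF qstar bdd_above_mixture_rel_risk[OF H_sub tau fb f]])
  moreover have "(\<integral>x. (fb x - ?ts x)\<^sup>2 \<partial>M) = (\<integral>x. (?ts x - fb x)\<^sup>2 \<partial>M)"
    by (simp add: power2_commute)
  ultimately show ?thesis
    using mixture_rel_risk_eq_diff[where tau = tau and q = qstar, OF tau fb f] by linarith
qed

theorem proposition2:
  fixes QX :: "'x measure"
    and tau :: "'s::finite \<Rightarrow> 'x \<Rightarrow> real"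
    and H :: "(real^'s) set"
    and F :: "('x \<Rightarrow> real) set"
    and fb :: "'x \<Rightarrow> real"
    and qstar :: "real^'s"
  assumes QX: "prob_space QX"
    and tau_meas: "\<And>s. tau s \<in> borel_measurable QX"
    and tau_L2: "\<And>s. integrable QX (\<lambda>x. (tau s x)\<^sup>2)"
    and fb_meas: "fb \<in> borel_measurable QX"
    and fb_L2: "integrable QX (\<lambda>x. (fb x)\<^sup>2)"
    and F_L2: "\<And>f. f \<in> F \<Longrightarrow> f \<in> borel_measurable QX \<and> integrable QX (\<lambda>x. (f x)\<^sup>2)"
    and F_convex: "fun_convex F"
    and tau_in_F: "\<And>s. tau s \<in> F"
    and H_sub: "H \<subseteq> prob_simplex"
    and H_convex: "convex H"
    and qstar_in: "qstar \<in> H"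
    and qstar_min: "\<And>q. q \<in> H \<Longrightarrow>
        (\<integral>x. (tau_mix tau qstar x - fb x)\<^sup>2 \<partial>QX) \<le> (\<integral>x. (tau_mix tau q x - fb x)\<^sup>2 \<partial>QX)"
  shows "tau_mix tau qstar \<in> F
    \<and> (\<forall>f\<in>F. robust_rel_risk QX tau H fb (tau_mix tau qstar) \<le> robust_rel_risk QX tau H fb f)
    \<and> (\<forall>f\<in>F. robust_rel_risk QX tau H fb f \<le> robust_rel_risk QX tau H fb (tau_mix tau qstar)
           \<longrightarrow> (AE x in QX. f x = tau_mix tau qstar x))"
proof -
  \<comment> \<open>QX need not be a probability measure: the kernels carry their own normalisation.\<close>
  have tau: "\<And>s. square_integrable QX (tau s)"
    and fb: "square_integrable QX fb"
    and F: "\<And>f. f \<in> F \<Longrightarrow> square_integrable QX f"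
    using tau_meas tau_L2 fb_meas fb_L2 F_L2 by (auto simp: square_integrable_def)
  let ?ts = "tau_mix tau qstar"
  have gap: "robust_rel_risk QX tau H fb ?ts + (\<integral>x. (f x - ?ts x)\<^sup>2 \<partial>QX) \<le> robust_rel_risk QX tau H fb f"
    if "f \<in> F" for f
    by (rule robust_rel_risk_tau_mix_min_gap[OF H_sub H_convex qstar_in qstar_min tau fb F[OF that]])
  have "?ts \<in> F"
    using H_sub qstar_in by (intro tau_mix_in_fun_convex[OF F_convex tau_in_F]) auto
  moreover have "robust_rel_risk QX tau H fb ?ts \<le> robust_rel_risk QX tau H fb f" if "f \<in> F" for f
  proof -
    have "0 \<le> (\<integral>x. (f x - ?ts x)\<^sup>2 \<partial>QX)" by simp
    with gap[OF that] show ?thesis by linarith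
  qed
  moreover have "AE x in QX. f x = ?ts x"
    if "f \<in> F" and "robust_rel_risk QX tau H fb f \<le> robust_rel_risk QX tau H fb ?ts" for f
  proof -
    have "AE x in QX. f x - ?ts x = 0"
      using gap[OF that(1)] that(2) F[OF that(1)] tau
      by (intro AE_eq_0_if_integral_square_le_0 square_integrable_diff square_integrable_tau_mix) auto
    then show ?thesis by simp
  qed
  ultimately show ?thesis by blast
qed

end
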